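(* Let $\Gamma>1$ and let $(\rho_L,u_L,p_L)$, $(\rho_R,u_R,p_R)$ be two states with $\rho_L,\rho_R,p_L,p_R>0$ and $|u_L|,|u_R|<1$. Set $W_{L}=1/\sqrt{1-u_{L}^2}$, $W_{R}=1/\sqrt{1-u_{R}^2}$, and $z_1=\rho$, $z_2=\rho/p$, $z_3=u$ (evaluated at the left and right states). Define \[ \tilde F_1=\{\!\{z_1\}\!\}^{\ln}\{\!\{uW\}\!\}, \qquad \alpha = 1+\frac{1}{(\Gamma-1)\{\!\{z_2\}\!\}^{\ln}}, \] \[ Q=\{\!\{z_2\}\!\}\{\!\{W\}\!\}^2+\{\!\{z_2\}\!\}\{\!\{z_3\}\!\}\{\!\{W\}\!\}\,\mathcal L(z_3)-\{\!\{z_2\}\!\}\{\!\{uW\}\!\}\,\mathcal L(z_3), \] \[ \tilde F_2=Q^{-1}\Big[\alpha\{\!\{z_2\}\!\}\mathcal L(z_3)\tilde F_1+\{\!\{z_1\}\!\}\{\!\{W\}\!\}^2+\{\!\{z_1\}\!\}\{\!\{z_3\}\!\}\{\!\{W\}\!\}\mathcal L(z_3)\Big], \] \[ \tilde F_3=Q^{-1}\Big[\{\!\{z_1\}\!\}\{\!\{W\}\!\}\{\!\{uW\}\!\}+\{\!\{z_1\}\!\}\{\!\{z_3\}\!\}\{\!\{uW\}\!\}\mathcal L(z_3)+\alpha\tilde F_1\big(\{\!\{z_2\}\!\}\{\!\{W\}\!\}+\{\!\{z_2\}\!\}\{\!\{z_3\}\!\}\mathcal L(z_3)\big)\Big]. \]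 Then $Q=\{\!\{z_2\}\!\}W_LW_R>0$, so $\tilde{\mathbf F}=(\tilde F_1,\tilde F_2,\tilde F_3)^{T}$ is well defined, and it satisfies the entropy conservation condition \[ [\![\mathbf V]\!]^{T}\tilde{\mathbf F}=[\![\psi]\!]. \] Moreover $\tilde{\mathbf F}$ is consistent: if $(\rho_L,u_L,p_L)=(\rho_R,u_R,p_R)=(\rho,u,p)$, then $\tilde{\mathbf F}=(\rho W u,\ \rho h W^2u^2+p,\ \rho h W^2 u)^T$, which is the one-dimensional special relativistic hydrodynamics flux $\mathbf F(\mathbf U)$ evaluated at that state.
   Context: One-dimensional special relativistic hydrodynamics (units with speed of light $1$) with ideal equation of state $p=(\Gamma-1)\rho e$: conservative variables $\mathbf U=(D,m,E)^T$ with $D=\rho W$, $m=\rho hW^2u$, $E=\rho hW^2-p$, flux $\mathbf F(\mathbf U)=(Du,\,mu+p,\,m)^T$, where $W=1/\sqrt{1-u^2}$ is the Lorentz factor and $h=1+\Gamma p/((\Gamma-1)\rho)$ the specific enthalpy. Thermodynamic entropy $S=\ln p-\Gamma\ln\rho$; entropy variables $\mathbf V=\big(\frac{\Gamma-S}{\Gamma-1}+\frac{\rho}{p},\ \frac{\rho W u}{p},\ -\frac{\rho W}{p}\big)^T$ and potential $\psi=\rho W u$ (these correspond to the entropy pair $\eta=-\rho WS/(\Gamma-1)$, $q=-\rho uWS/(\Gamma-1)$). For a quantity $a$ taking values $a_L,a_R$ at the two states: jump $[\![a]\!]=a_R-a_L$; arithmetic mean $\{\!\{a\}\!\}=(a_L+a_R)/2$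 (so e.g. $\{\!\{uW\}\!\}=(u_LW_L+u_RW_R)/2$); for positive $a$, logarithmic mean $\{\!\{a\}\!\}^{\ln}=[\![a]\!]/[\![\ln a]\!]$ if $a_L\neq a_R$ and $\{\!\{a\}\!\}^{\ln}=a_L$ if $a_L=a_R$. The "Lorentz mean" is $\mathcal L(u)=\dfrac{u_L+u_R}{\sqrt{1-u_L^2}\sqrt{1-u_R^2}\big(\sqrt{1-u_L^2}+\sqrt{1-u_R^2}\big)}$, which satisfies $[\![W]\!]=\mathcal L(u)[\![u]\!]$; $\mathcal L(z_3)$ means $\mathcal L(u)$. *)

theory Defs
  imports Complex_Main
begin

definition lorentzW :: "real \<Rightarrow> real" where
  "lorentzW u = 1 / sqrt (1 - u\<^sup>2)"

definition amean :: "real \<Rightarrow> real \<Rightarrow> real" where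
  "amean aL aR = (aL + aR) / 2"

definition lnmean :: "real \<Rightarrow> real \<Rightarrow> real" where
  "lnmean aL aR = (if aL = aR then aL else (aR - aL) / (ln aR - ln aL))"

definition lorentz_mean :: "real \<Rightarrow> real \<Rightarrow> real" where
  "lorentz_mean uL uR = (uL + uR) /
     (sqrt (1 - uL\<^sup>2) * sqrt (1 - uR\<^sup>2) * (sqrt (1 - uL\<^sup>2) + sqrt (1 - uR\<^sup>2)))"

definition enthalpy :: "real \<Rightarrow> real \<Rightarrow> real \<Rightarrow> real" where
  "enthalpy \<Gamma> \<rho> p = 1 + \<Gamma> * p / ((\<Gamma> - 1) * \<rho>)"

definition entropyS :: "real \<Rightarrow> real \<Rightarrow> real \<Rightarrow> real" where
  "entropyS \<Gamma> \<rho> p = ln p - \<Gamma> * ln \<rho>"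

definition entV1 :: "real \<Rightarrow> real \<Rightarrow> real \<Rightarrow> real \<Rightarrow> real" where
  "entV1 \<Gamma> \<rho> u p = (\<Gamma> - entropyS \<Gamma> \<rho> p) / (\<Gamma> - 1) + \<rho> / p"
definition entV2 :: "real \<Rightarrow> real \<Rightarrow> real \<Rightarrow> real \<Rightarrow> real" where
  "entV2 \<Gamma> \<rho> u p = \<rho> * lorentzW u * u / p"
definition entV3 :: "real \<Rightarrow> real \<Rightarrow> real \<Rightarrow> real \<Rightarrow> real" where
  "entV3 \<Gamma> \<rho> u p = - (\<rho> * lorentzW u / p)"

definition potential :: "real \<Rightarrow> real \<Rightarrow> real \<Rightarrow> real" where
  "potential \<rho> u p = \<rho> * lorentzW u * u"

definition physflux :: "real \<Rightarrow> real \<Rightarrow> real \<Rightarrow> real \<Rightarrow> real \<times> real \<times> real" where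
  "physflux \<Gamma> \<rho> u p =
     (let W = lorentzW u; h = enthalpy \<Gamma> \<rho> p;
          D = \<rho> * W; m = \<rho> * h * W\<^sup>2 * u
      in (D * u, m * u + p, m))"

definition fluxQ :: "real \<Rightarrow> real \<Rightarrow> real \<Rightarrow> real \<Rightarrow> real \<Rightarrow> real \<Rightarrow> real" where
  "fluxQ \<rho>L uL pL \<rho>R uR pR =
     (let z2 = amean (\<rho>L / pL) (\<rho>R / pR); z3 = amean uL uR;
          Wm = amean (lorentzW uL) (lorentzW uR);
          uWm = amean (uL * lorentzW uL) (uR * lorentzW uR);
          Lm = lorentz_mean uL uR
      in z2 * Wm\<^sup>2 + z2 * z3 * Wm * Lm - z2 * uWm * Lm)"

definition fluxF1 :: "real \<Rightarrow> real \<Rightarrow> real \<Rightarrow> real \<Rightarrow> real \<Rightarrow> real \<Rightarrow> real" where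
  "fluxF1 \<rho>L uL pL \<rho>R uR pR =
     lnmean \<rho>L \<rho>R * amean (uL * lorentzW uL) (uR * lorentzW uR)"

definition fluxAlpha :: "real \<Rightarrow> real \<Rightarrow> real \<Rightarrow> real \<Rightarrow> real \<Rightarrow> real \<Rightarrow> real \<Rightarrow> real" where
  "fluxAlpha \<Gamma> \<rho>L uL pL \<rho>R uR pR = 1 + 1 / ((\<Gamma> - 1) * lnmean (\<rho>L / pL) (\<rho>R / pR))"

definition fluxF2 :: "real \<Rightarrow> real \<Rightarrow> real \<Rightarrow> real \<Rightarrow> real \<Rightarrow> real \<Rightarrow> real \<Rightarrow> real" where
  "fluxF2 \<Gamma> \<rho>L uL pL \<rho>R uR pR =
     (let z1 = amean \<rho>L \<rho>R; z2 = amean (\<rho>L / pL) (\<rho>R / pR); z3 = amean uL uR;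
          Wm = amean (lorentzW uL) (lorentzW uR);
          Lm = lorentz_mean uL uR;
          \<alpha> = fluxAlpha \<Gamma> \<rho>L uL pL \<rho>R uR pR;
          F1 = fluxF1 \<rho>L uL pL \<rho>R uR pR;
          Q = fluxQ \<rho>L uL pL \<rho>R uR pR
      in (\<alpha> * z2 * Lm * F1 + z1 * Wm\<^sup>2 + z1 * z3 * Wm * Lm) / Q)"

definition fluxF3 :: "real \<Rightarrow> real \<Rightarrow> real \<Rightarrow> real \<Rightarrow> real \<Rightarrow> real \<Rightarrow> real \<Rightarrow> real" where
  "fluxF3 \<Gamma> \<rho>L uL pL \<rho>R uR pR =
     (let z1 = amean \<rho>L \<rho>R; z2 = amean (\<rho>L / pL) (\<rho>R / pR); z3 = amean uL uR;
          Wm = amean (lorentzW uL) (lorentzW uR);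
          uWm = amean (uL * lorentzW uL) (uR * lorentzW uR);
          Lm = lorentz_mean uL uR;
          \<alpha> = fluxAlpha \<Gamma> \<rho>L uL pL \<rho>R uR pR;
          F1 = fluxF1 \<rho>L uL pL \<rho>R uR pR;
          Q = fluxQ \<rho>L uL pL \<rho>R uR pR
      in (z1 * Wm * uWm + z1 * z3 * uWm * Lm + \<alpha> * F1 * (z2 * Wm + z2 * z3 * Lm)) / Q)"

end

(*
  Two discrete chain rules drive the proof: the logarithmic mean satisfies
  {{a}}^ln [[ln a]] = [[a]], and the Lorentz mean satisfies L(u) [[u]] = [[W]]; arithmetic
  means obey the product rule [[a b]] = {{a}} [[b]] + {{b}} [[a]]. With these, the entropy
  residual [[V]]^T F - [[psi]] becomes a combination of two linear equations in F2, F3 plus a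
  multiple of [[W]] - L(u) [[u]]. The given F2, F3 are exactly the Cramer solution of those
  two equations; their determinant Q collapses, again by [[W]] = L(u) [[u]], to
  {{rho/p}} W_L W_R > 0.
*)
theory Submission
  imports Defs
begin

lemma sqrt_one_minus_square:
  fixes u :: real
  assumes "\<bar>u\<bar> < 1"
  shows "sqrt (1 - u\<^sup>2) > 0" "(sqrt (1 - u\<^sup>2))\<^sup>2 = 1 - u\<^sup>2"
proof -
  have "u\<^sup>2 < 1" using assms by (simp add: abs_square_less_1)
  then show "sqrt (1 - u\<^sup>2) > 0" "(sqrt (1 - u\<^sup>2))\<^sup>2 = 1 - u\<^sup>2" by simp_all
qed

lemma lorentzW_pos: "\<bar>u\<bar> < 1 \<Longrightarrow> lorentzW u > 0"
  using sqrt_one_minus_square(1) by (simp add: lorentzW_def)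

lemma lorentzW_square:
  assumes "\<bar>u\<bar> < 1"
  shows "(lorentzW u)\<^sup>2 * (1 - u\<^sup>2) = 1"
  using sqrt_one_minus_square[OF assms] by (simp add: lorentzW_def power_divide)

lemma lorentz_mean_jump:
  assumes "\<bar>uL\<bar> < 1" "\<bar>uR\<bar> < 1"
  shows "lorentz_mean uL uR * (uR - uL) = lorentzW uR - lorentzW uL"
proof -
  define sL where "sL = sqrt (1 - uL\<^sup>2)"
  define sR where "sR = sqrt (1 - uR\<^sup>2)"
  have sL: "sL > 0" "sL\<^sup>2 = 1 - uL\<^sup>2"
    using sqrt_one_minus_square[OF assms(1)] by (simp_all add: sL_def)
  have sR: "sR > 0" "sR\<^sup>2 = 1 - uR\<^sup>2"
    using sqrt_one_minus_square[OF assms(2)] by (simp_all add: sR_def)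
  have "lorentz_mean uL uR * (uR - uL) = (uL + uR) * (uR - uL) / (sL * sR * (sL + sR))"
    by (simp add: lorentz_mean_def sL_def sR_def)
  also have "(uL + uR) * (uR - uL) = (sL - sR) * (sL + sR)"
    using sL sR by (simp add: algebra_simps power2_eq_square)
  also have "(sL - sR) * (sL + sR) / (sL * sR * (sL + sR)) = (sL - sR) / (sL * sR)"
    using sL sR by simp
  also have "\<dots> = 1 / sR - 1 / sL"
    using sL sR by (simp add: field_simps)
  finally show ?thesis by (simp add: lorentzW_def sL_def sR_def)
qed

lemma lorentz_mean_diag:
  assumes "\<bar>u\<bar> < 1"
  shows "lorentz_mean u u = u * (lorentzW u) ^ 3"
  using sqrt_one_minus_square(1)[OF assms]
  by (simp add: lorentz_mean_def lorentzW_def field_simps power3_eq_cube)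

lemma lnmean_jump:
  fixes a b :: real
  assumes "a > 0" "b > 0"
  shows "lnmean a b * (ln b - ln a) = b - a"
  using assms by (simp add: lnmean_def)

lemma lnmean_pos:
  fixes a b :: real
  assumes "a > 0" "b > 0"
  shows "lnmean a b > 0"
proof (cases "a < b")
  case True
  then show ?thesis using assms by (simp add: lnmean_def divide_pos_pos)
next
  case False
  then show ?thesis using assms by (auto simp: lnmean_def divide_neg_neg)
qed

lemma fluxQ_eq:
  assumes "\<bar>uL\<bar> < 1" "\<bar>uR\<bar> < 1"
  shows "fluxQ \<rho>L uL pL \<rho>R uR pR = amean (\<rho>L / pL) (\<rho>R / pR) * lorentzW uL * lorentzW uR"
proof -
  define WL WR Lm where "WL = lorentzW uL" and "WR = lorentzW uR" and "Lm = lorentz_mean uL uR"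
  have jump: "Lm * (uR - uL) = WR - WL"
    using lorentz_mean_jump[OF assms] by (simp add: Lm_def WL_def WR_def)
  have "fluxQ \<rho>L uL pL \<rho>R uR pR = amean (\<rho>L / pL) (\<rho>R / pR)
      * (amean WL WR ^ 2 + Lm * (amean uL uR * amean WL WR - amean (uL * WL) (uR * WR)))"
    by (simp add: fluxQ_def Let_def WL_def WR_def Lm_def algebra_simps)
  also have "amean uL uR * amean WL WR - amean (uL * WL) (uR * WR) = - (uR - uL) * (WR - WL) / 4"
    by (simp add: amean_def field_simps)
  also have "amean WL WR ^ 2 + Lm * (- (uR - uL) * (WR - WL) / 4)
      = amean WL WR ^ 2 - Lm * (uR - uL) * (WR - WL) / 4"
    by (simp add: field_simps)
  also have "\<dots> = WL * WR"
    unfolding jump by (simp add: amean_def field_simps power2_eq_square)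
  finally show ?thesis by (simp add: WL_def WR_def)
qed

lemma fluxQ_pos:
  assumes "\<rho>L > 0" "\<rho>R > 0" "pL > 0" "pR > 0" "\<bar>uL\<bar> < 1" "\<bar>uR\<bar> < 1"
  shows "fluxQ \<rho>L uL pL \<rho>R uR pR > 0"
proof -
  have "\<rho>L / pL + \<rho>R / pR > 0" using assms by (simp add: add_pos_pos)
  then show ?thesis
    using assms lorentzW_pos[of uL] lorentzW_pos[of uR] by (simp add: fluxQ_eq amean_def)
qed

text \<open>\<open>F2\<close> and \<open>F3\<close> are the Cramer solution of a \<open>2 \<times> 2\<close> linear system whose determinant is \<open>Q\<close>.\<close>

lemma flux_linear_system:
  fixes Q bm Wm z3 L uWm \<alpha> F1 rm F2 F3 :: real
  assumes Q: "Q = bm * Wm\<^sup>2 + bm * z3 * Wm * L - bm * uWm * L" "Q \<noteq> 0"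
    and F2: "F2 = (\<alpha> * bm * L * F1 + rm * Wm\<^sup>2 + rm * z3 * Wm * L) / Q"
    and F3: "F3 = (rm * Wm * uWm + rm * z3 * uWm * L + \<alpha> * F1 * (bm * Wm + bm * z3 * L)) / Q"
  shows "uWm * F2 - Wm * F3 = - \<alpha> * F1"
    and "bm * (Wm + z3 * L) * F2 - bm * L * F3 = rm * (Wm + z3 * L)"
proof -
  have "Q * (uWm * F2 - Wm * F3 + \<alpha> * F1) = uWm * (\<alpha> * bm * L * F1 + rm * Wm\<^sup>2 + rm * z3 * Wm * L)
      - Wm * (rm * Wm * uWm + rm * z3 * uWm * L + \<alpha> * F1 * (bm * Wm + bm * z3 * L)) + \<alpha> * F1 * Q"
    using Q(2) unfolding F2 F3 by (simp add: field_simps)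
  also have "\<dots> = 0"
    unfolding Q(1) by (simp add: algebra_simps power2_eq_square)
  finally show "uWm * F2 - Wm * F3 = - \<alpha> * F1" using Q(2) by simp
  have "Q * (bm * (Wm + z3 * L) * F2 - bm * L * F3 - rm * (Wm + z3 * L))
      = bm * (Wm + z3 * L) * (\<alpha> * bm * L * F1 + rm * Wm\<^sup>2 + rm * z3 * Wm * L)
        - bm * L * (rm * Wm * uWm + rm * z3 * uWm * L + \<alpha> * F1 * (bm * Wm + bm * z3 * L))
        - rm * (Wm + z3 * L) * Q"
    using Q(2) unfolding F2 F3 by (simp add: field_simps)
  also have "\<dots> = 0"
    unfolding Q(1) by (simp add: algebra_simps power2_eq_square)
  finally show "bm * (Wm + z3 * L) * F2 - bm * L * F3 = rm * (Wm + z3 * L)" using Q(2) by simp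
qed

lemma entV1_eq:
  assumes "\<Gamma> \<noteq> 1" "\<rho> > 0" "p > 0"
  shows "entV1 \<Gamma> \<rho> u p = \<Gamma> / (\<Gamma> - 1) + ln \<rho> + ln (\<rho> / p) / (\<Gamma> - 1) + \<rho> / p"
proof -
  have "\<Gamma> - entropyS \<Gamma> \<rho> p = \<Gamma> + (\<Gamma> - 1) * ln \<rho> + ln (\<rho> / p)"
    using assms(2,3) by (simp add: entropyS_def ln_div algebra_simps)
  then have "(\<Gamma> - entropyS \<Gamma> \<rho> p) / (\<Gamma> - 1)
      = (\<Gamma> + (\<Gamma> - 1) * ln \<rho> + ln (\<rho> / p)) / (\<Gamma> - 1)"
    by (simp only:)
  also have "\<dots> = \<Gamma> / (\<Gamma> - 1) + ln \<rho> + ln (\<rho> / p) / (\<Gamma> - 1)"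
    using assms(1) by (simp add: add_divide_distrib)
  finally show ?thesis by (simp add: entV1_def)
qed

lemma fluxAlpha_jump:
  assumes "\<Gamma> \<noteq> 1" "\<rho>L > 0" "\<rho>R > 0" "pL > 0" "pR > 0"
  shows "fluxAlpha \<Gamma> \<rho>L uL pL \<rho>R uR pR * (\<rho>R / pR - \<rho>L / pL)
    = (\<rho>R / pR - \<rho>L / pL) + (ln (\<rho>R / pR) - ln (\<rho>L / pL)) / (\<Gamma> - 1)"
proof -
  define bL bR where "bL = \<rho>L / pL" and "bR = \<rho>R / pR"
  have b: "bL > 0" "bR > 0" using assms by (simp_all add: bL_def bR_def)
  have "fluxAlpha \<Gamma> \<rho>L uL pL \<rho>R uR pR * (bR - bL)
      = (bR - bL) + lnmean bL bR * (ln bR - ln bL) / ((\<Gamma> - 1) * lnmean bL bR)"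
    unfolding lnmean_jump[OF b] by (simp add: fluxAlpha_def bL_def bR_def algebra_simps)
  also have "\<dots> = (bR - bL) + (ln bR - ln bL) / (\<Gamma> - 1)"
    using lnmean_pos[OF b] by simp
  finally show ?thesis by (simp add: bL_def bR_def)
qed

lemma entV1_jump_mul_fluxF1:
  assumes "\<Gamma> > 1" "\<rho>L > 0" "\<rho>R > 0" "pL > 0" "pR > 0"
  shows "(entV1 \<Gamma> \<rho>R uR pR - entV1 \<Gamma> \<rho>L uL pL) * fluxF1 \<rho>L uL pL \<rho>R uR pR
    = (\<rho>R - \<rho>L) * amean (uL * lorentzW uL) (uR * lorentzW uR)
      + fluxAlpha \<Gamma> \<rho>L uL pL \<rho>R uR pR * fluxF1 \<rho>L uL pL \<rho>R uR pR * (\<rho>R / pR - \<rho>L / pL)"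
proof -
  define bL bR uWm F1 where "bL = \<rho>L / pL" and "bR = \<rho>R / pR"
    and "uWm = amean (uL * lorentzW uL) (uR * lorentzW uR)" and "F1 = fluxF1 \<rho>L uL pL \<rho>R uR pR"
  have "(entV1 \<Gamma> \<rho>R uR pR - entV1 \<Gamma> \<rho>L uL pL) * F1
      = lnmean \<rho>L \<rho>R * (ln \<rho>R - ln \<rho>L) * uWm + F1 * ((bR - bL) + (ln bR - ln bL) / (\<Gamma> - 1))"
    using assms
    by (simp add: entV1_eq F1_def fluxF1_def bL_def bR_def uWm_def diff_divide_distrib algebra_simps)
  also have "(bR - bL) + (ln bR - ln bL) / (\<Gamma> - 1) = fluxAlpha \<Gamma> \<rho>L uL pL \<rho>R uR pR * (bR - bL)"
    using assms fluxAlpha_jump[of \<Gamma> \<rho>L \<rho>R pL pR uL uR] by (simp add: bL_def bR_def)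
  finally show ?thesis
    unfolding lnmean_jump[OF assms(2,3)] by (simp add: F1_def bL_def bR_def uWm_def algebra_simps)
qed

lemma fluxF_entropy_conservative:
  assumes "\<Gamma> > 1" "\<rho>L > 0" "\<rho>R > 0" "pL > 0" "pR > 0" "\<bar>uL\<bar> < 1" "\<bar>uR\<bar> < 1"
  shows "(entV1 \<Gamma> \<rho>R uR pR - entV1 \<Gamma> \<rho>L uL pL) * fluxF1 \<rho>L uL pL \<rho>R uR pR
       + (entV2 \<Gamma> \<rho>R uR pR - entV2 \<Gamma> \<rho>L uL pL) * fluxF2 \<Gamma> \<rho>L uL pL \<rho>R uR pR
       + (entV3 \<Gamma> \<rho>R uR pR - entV3 \<Gamma> \<rho>L uL pL) * fluxF3 \<Gamma> \<rho>L uL pL \<rho>R uR pR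
     = potential \<rho>R uR pR - potential \<rho>L uL pL"
proof -
  define bL bR WL WR where "bL = \<rho>L / pL" and "bR = \<rho>R / pR"
    and "WL = lorentzW uL" and "WR = lorentzW uR"
  define Lm bm rm z3 Wm uWm where "Lm = lorentz_mean uL uR" and "bm = amean bL bR"
    and "rm = amean \<rho>L \<rho>R" and "z3 = amean uL uR" and "Wm = amean WL WR"
    and "uWm = amean (uL * WL) (uR * WR)"
  define \<alpha> F1 F2 F3 where "\<alpha> = fluxAlpha \<Gamma> \<rho>L uL pL \<rho>R uR pR"
    and "F1 = fluxF1 \<rho>L uL pL \<rho>R uR pR" and "F2 = fluxF2 \<Gamma> \<rho>L uL pL \<rho>R uR pR"
    and "F3 = fluxF3 \<Gamma> \<rho>L uL pL \<rho>R uR pR"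
  define Q where "Q = fluxQ \<rho>L uL pL \<rho>R uR pR"
  note defs = bL_def bR_def WL_def WR_def Lm_def bm_def rm_def z3_def Wm_def uWm_def \<alpha>_def F1_def Q_def
  have Q: "Q = bm * Wm\<^sup>2 + bm * z3 * Wm * Lm - bm * uWm * Lm" "Q \<noteq> 0"
    using fluxQ_pos[OF assms(2-7)] by (simp_all add: fluxQ_def Let_def defs)
  have "F2 = (\<alpha> * bm * Lm * F1 + rm * Wm\<^sup>2 + rm * z3 * Wm * Lm) / Q"
    and "F3 = (rm * Wm * uWm + rm * z3 * uWm * Lm + \<alpha> * F1 * (bm * Wm + bm * z3 * Lm)) / Q"
    by (simp_all add: F2_def F3_def fluxF2_def fluxF3_def Let_def defs)
  note system = flux_linear_system[OF Q this]
  have Lj: "Lm * (uR - uL) = WR - WL"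
    using lorentz_mean_jump[OF assms(6,7)] by (simp add: Lm_def WL_def WR_def)
  have V1: "(entV1 \<Gamma> \<rho>R uR pR - entV1 \<Gamma> \<rho>L uL pL) * F1 = (\<rho>R - \<rho>L) * uWm + \<alpha> * F1 * (bR - bL)"
    using entV1_jump_mul_fluxF1[OF assms(1-5), where uL = uL and uR = uR] by (simp add: defs)
  text \<open>The residual splits into the two equations of the linear system and the
    defect of the Lorentz mean jump, which all vanish.\<close>
  have "(\<rho>R - \<rho>L) * uWm + \<alpha> * F1 * (bR - bL)
      + (bR * WR * uR - bL * WL * uL) * F2 + (bL * WL - bR * WR) * F3 - (\<rho>R * WR * uR - \<rho>L * WL * uL)
    = (bR - bL) * (\<alpha> * F1 + uWm * F2 - Wm * F3)
      + (uR - uL) * (bm * (Wm + z3 * Lm) * F2 - bm * Lm * F3 - rm * (Wm + z3 * Lm))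
      + (bm * F2 * z3 - rm * z3 - bm * F3) * ((WR - WL) - Lm * (uR - uL))"
    by (simp add: bm_def rm_def z3_def Wm_def uWm_def amean_def field_simps)
  also have "\<dots> = 0"
    using system Lj by simp
  finally show ?thesis
    using V1 by (simp add: entV2_def entV3_def potential_def F2_def F3_def defs algebra_simps)
qed

lemma fluxF_consistent:
  assumes "\<Gamma> > 1" "\<rho> > 0" "p > 0" "\<bar>u\<bar> < 1"
  shows "fluxF1 \<rho> u p \<rho> u p = \<rho> * lorentzW u * u"
    and "fluxF2 \<Gamma> \<rho> u p \<rho> u p = \<rho> * enthalpy \<Gamma> \<rho> p * (lorentzW u)\<^sup>2 * u\<^sup>2 + p"
    and "fluxF3 \<Gamma> \<rho> u p \<rho> u p = \<rho> * enthalpy \<Gamma> \<rho> p * (lorentzW u)\<^sup>2 * u"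
proof -
  define W \<alpha> where "W = lorentzW u" and "\<alpha> = fluxAlpha \<Gamma> \<rho> u p \<rho> u p"
  have W: "W > 0" "W\<^sup>2 * (1 - u\<^sup>2) = 1"
    using lorentzW_pos[OF assms(4)] lorentzW_square[OF assms(4)] by (simp_all add: W_def)
  have F1: "fluxF1 \<rho> u p \<rho> u p = \<rho> * u * W"
    by (simp add: fluxF1_def lnmean_def amean_def W_def)
  then show "fluxF1 \<rho> u p \<rho> u p = \<rho> * lorentzW u * u"
    by (simp add: W_def)
  have Q: "fluxQ \<rho> u p \<rho> u p = \<rho> / p * W\<^sup>2"
    using fluxQ_eq[OF assms(4,4), of \<rho> p \<rho> p] by (simp add: amean_def W_def power2_eq_square)
  have L: "lorentz_mean u u = u * W ^ 3"
    using lorentz_mean_diag[OF assms(4)] by (simp add: W_def)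
  have rho_enthalpy: "\<rho> * enthalpy \<Gamma> \<rho> p = \<alpha> * \<rho> + p"
    using assms(1,2) by (simp add: \<alpha>_def fluxAlpha_def lnmean_def enthalpy_def field_simps)
  have "W ^ 3 = W * (W\<^sup>2 * (1 - u\<^sup>2)) + u * (u * W ^ 3)"
    by (simp add: algebra_simps power2_eq_square power3_eq_cube)
  then have W3: "W + u * (u * W ^ 3) = W ^ 3"
    unfolding W(2) by simp
  have "fluxF2 \<Gamma> \<rho> u p \<rho> u p
      = (\<alpha> * (\<rho> / p) * (u * W ^ 3) * (\<rho> * u * W) + \<rho> * W * (W + u * (u * W ^ 3))) / (\<rho> / p * W\<^sup>2)"
    by (simp add: fluxF2_def Let_def amean_def F1 Q L flip: \<alpha>_def W_def)
      (simp add: algebra_simps power2_eq_square)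
  also have "\<dots> = (\<alpha> * (\<rho> / p) * (u * W ^ 3) * (\<rho> * u * W) + \<rho> * W * W ^ 3) / (\<rho> / p * W\<^sup>2)"
    unfolding W3 ..
  also have "\<dots> = W\<^sup>2 * (\<alpha> * \<rho> * u\<^sup>2 + p)"
    using assms W(1) by (simp add: field_simps power2_eq_square power3_eq_cube)
  also have "\<dots> = \<rho> * enthalpy \<Gamma> \<rho> p * W\<^sup>2 * u\<^sup>2 + p"
    unfolding rho_enthalpy using W(2) by (simp add: algebra_simps) (metis distrib_left mult.right_neutral)
  finally show "fluxF2 \<Gamma> \<rho> u p \<rho> u p = \<rho> * enthalpy \<Gamma> \<rho> p * (lorentzW u)\<^sup>2 * u\<^sup>2 + p"
    by (simp add: W_def)
  have "fluxF3 \<Gamma> \<rho> u p \<rho> u p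
      = (\<rho> * (u * W) + \<alpha> * (\<rho> * u * W) * (\<rho> / p)) * (W + u * (u * W ^ 3)) / (\<rho> / p * W\<^sup>2)"
    by (simp add: fluxF3_def Let_def amean_def F1 Q L flip: \<alpha>_def W_def)
      (simp add: algebra_simps add_divide_distrib)
  also have "\<dots> = (\<rho> * (u * W) + \<alpha> * (\<rho> * u * W) * (\<rho> / p)) * W ^ 3 / (\<rho> / p * W\<^sup>2)"
    unfolding W3 ..
  also have "\<dots> = \<rho> * enthalpy \<Gamma> \<rho> p * W\<^sup>2 * u"
    unfolding rho_enthalpy using assms W(1) by (simp add: field_simps power2_eq_square power3_eq_cube)
  finally show "fluxF3 \<Gamma> \<rho> u p \<rho> u p = \<rho> * enthalpy \<Gamma> \<rho> p * (lorentzW u)\<^sup>2 * u"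
    by (simp add: W_def)
qed

lemma physflux_eq:
  "physflux \<Gamma> \<rho> u p = (\<rho> * lorentzW u * u,
     \<rho> * enthalpy \<Gamma> \<rho> p * (lorentzW u)\<^sup>2 * u\<^sup>2 + p, \<rho> * enthalpy \<Gamma> \<rho> p * (lorentzW u)\<^sup>2 * u)"
  by (simp add: physflux_def Let_def power2_eq_square algebra_simps)

theorem mainTheorem1:
  fixes \<Gamma> \<rho>L uL pL \<rho>R uR pR :: real
  assumes "\<Gamma> > 1"
    and "\<rho>L > 0" and "\<rho>R > 0" and "pL > 0" and "pR > 0"
    and "\<bar>uL\<bar> < 1" and "\<bar>uR\<bar> < 1"
  shows "fluxQ \<rho>L uL pL \<rho>R uR pR
           = amean (\<rho>L / pL) (\<rho>R / pR) * lorentzW uL * lorentzW uR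
    \<and> fluxQ \<rho>L uL pL \<rho>R uR pR > 0
    \<and> (entV1 \<Gamma> \<rho>R uR pR - entV1 \<Gamma> \<rho>L uL pL) * fluxF1 \<rho>L uL pL \<rho>R uR pR
         + (entV2 \<Gamma> \<rho>R uR pR - entV2 \<Gamma> \<rho>L uL pL) * fluxF2 \<Gamma> \<rho>L uL pL \<rho>R uR pR
         + (entV3 \<Gamma> \<rho>R uR pR - entV3 \<Gamma> \<rho>L uL pL) * fluxF3 \<Gamma> \<rho>L uL pL \<rho>R uR pR
         = potential \<rho>R uR pR - potential \<rho>L uL pL
    \<and> ((\<rho>L = \<rho>R \<and> uL = uR \<and> pL = pR) \<longrightarrow>
         (fluxF1 \<rho>L uL pL \<rho>R uR pR, fluxF2 \<Gamma> \<rho>L uL pL \<rho>R uR pR, fluxF3 \<Gamma> \<rho>L uL pL \<rho>R uR pR)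
           = (\<rho>L * lorentzW uL * uL,
              \<rho>L * enthalpy \<Gamma> \<rho>L pL * (lorentzW uL)\<^sup>2 * uL\<^sup>2 + pL,
              \<rho>L * enthalpy \<Gamma> \<rho>L pL * (lorentzW uL)\<^sup>2 * uL)
         \<and> (fluxF1 \<rho>L uL pL \<rho>R uR pR, fluxF2 \<Gamma> \<rho>L uL pL \<rho>R uR pR, fluxF3 \<Gamma> \<rho>L uL pL \<rho>R uR pR)
           = physflux \<Gamma> \<rho>L uL pL)"
  using assms fluxQ_pos[OF assms(2-7)]
  by (auto simp: fluxQ_eq fluxF_entropy_conservative fluxF_consistent physflux_eq)

end
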